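(* Let $G$ be a finite group and $p$ the smallest prime divisor of $|G|$. If $G'\not\subseteq Z(G)$ and $|G/C_G(G')|=|G'\cap Z(G)|=p$, then $Z(G)^*\subsetneq C_G(G')$ and $C_G(G')/Z(G)^*$ can be embedded in $G'/(G'\cap Z(G))$.
   Context: $G'$ is the commutator subgroup, $Z(G)$ the center, $C_G(G')$ the centralizer of $G'$ in $G$. Commutators are $[x,y]=xyx^{-1}y^{-1}$; for $x\in G$, $[G,x]=\{[y,x]: y\in G\}$; for a subset $H\subseteq G$, $H^*=\{x\in G : [G,x]\subseteq H\}$. Thus $Z(G)^*=\{x\in G: [G,x]\subseteq Z(G)\}$. *)

theory Defs
  imports "HOL-Algebra.Algebra" "HOL-Computational_Algebra.Primes"
begin

text \<open>Commutator [x,y] = x y x^-1 y^-1 (same convention as HOL-Algebra's derived_set).\<close>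
definition gcomm :: "('a, 'b) monoid_scheme \<Rightarrow> 'a \<Rightarrow> 'a \<Rightarrow> 'a" where
  "gcomm G x y = x \<otimes>\<^bsub>G\<^esub> y \<otimes>\<^bsub>G\<^esub> inv\<^bsub>G\<^esub> x \<otimes>\<^bsub>G\<^esub> inv\<^bsub>G\<^esub> y"

definition gcenter :: "('a, 'b) monoid_scheme \<Rightarrow> 'a set" where
  "gcenter G = {z \<in> carrier G. \<forall>x \<in> carrier G. z \<otimes>\<^bsub>G\<^esub> x = x \<otimes>\<^bsub>G\<^esub> z}"

definition gcentralizer :: "('a, 'b) monoid_scheme \<Rightarrow> 'a set \<Rightarrow> 'a set" where
  "gcentralizer G H = {x \<in> carrier G. \<forall>h \<in> H. x \<otimes>\<^bsub>G\<^esub> h = h \<otimes>\<^bsub>G\<^esub> x}"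

definition gstar :: "('a, 'b) monoid_scheme \<Rightarrow> 'a set \<Rightarrow> 'a set" where
  "gstar G H = {x \<in> carrier G. \<forall>y \<in> carrier G. gcomm G y x \<in> H}"

end

theory Submission
  imports Defs
begin

text \<open>Write \<open>D = G'\<close>, \<open>C = C\<^sub>G(D)\<close> and \<open>Z = Z(G)\<close>. Elements of \<open>C\<close> commute with all
  commutators, so \<open>C\<close> is normal, its own commutators are central, and for fixed \<open>g\<close> the map
  \<open>x \<mapsto> [g,x]\<close> is a homomorphism \<open>C \<rightarrow> D\<close>. Because \<open>|G : C|\<close> is prime, \<open>C\<close> is a maximal
  subgroup; hence, for \<open>g \<notin> C\<close> and \<open>x \<in> C\<close>, the subgroup \<open>{y. [y,x] \<in> Z}\<close>, which contains \<open>C\<close>,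
  is all of \<open>G\<close> as soon as it contains \<open>g\<close>. So \<open>Z\<^sup>*\<close> is exactly the kernel of
  \<open>C \<rightarrow> D/(D \<inter> Z)\<close>, \<open>x \<mapsto> [g,x](D \<inter> Z)\<close>, and the homomorphism theorem gives the embedding.
  \<open>Z\<^sup>* \<noteq> C\<close>, since otherwise the same maximality argument would put \<open>g\<close> into \<open>Z\<^sup>* \<subseteq> C\<close>.\<close>

lemma (in group_hom) hom_gcomm:
  "x \<in> carrier G \<Longrightarrow> y \<in> carrier G \<Longrightarrow> h (gcomm G x y) = gcomm H (h x) (h y)"
  by (simp add: gcomm_def)

context group begin

lemma inv_mult_cancel_left [simp]: "x \<in> carrier G \<Longrightarrow> y \<in> carrier G \<Longrightarrow> inv x \<otimes> (x \<otimes> y) = y"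
  by (simp add: m_assoc [symmetric])

lemma mult_inv_cancel_left [simp]: "x \<in> carrier G \<Longrightarrow> y \<in> carrier G \<Longrightarrow> x \<otimes> (inv x \<otimes> y) = y"
  by (simp add: m_assoc [symmetric])

lemma gcomm_closed [simp]:
  "x \<in> carrier G \<Longrightarrow> y \<in> carrier G \<Longrightarrow> gcomm G x y \<in> carrier G"
  by (simp add: gcomm_def)

lemma gcomm_self [simp]: "x \<in> carrier G \<Longrightarrow> gcomm G x x = \<one>"
  by (simp add: gcomm_def m_assoc)

lemma inv_gcomm: "x \<in> carrier G \<Longrightarrow> y \<in> carrier G \<Longrightarrow> inv (gcomm G x y) = gcomm G y x"
  by (simp add: gcomm_def inv_mult_group m_assoc)

lemma gcomm_mult_left:
  "x \<in> carrier G \<Longrightarrow> y \<in> carrier G \<Longrightarrow> z \<in> carrier G \<Longrightarrow>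
   gcomm G (y \<otimes> z) x = y \<otimes> gcomm G z x \<otimes> inv y \<otimes> gcomm G y x"
  by (simp add: gcomm_def inv_mult_group m_assoc)

lemma gcomm_mult_right:
  "x \<in> carrier G \<Longrightarrow> y \<in> carrier G \<Longrightarrow> x' \<in> carrier G \<Longrightarrow>
   gcomm G y (x \<otimes> x') = gcomm G y x \<otimes> (x \<otimes> gcomm G y x' \<otimes> inv x)"
  by (simp add: gcomm_def inv_mult_group m_assoc)

lemma gcomm_inv_left:
  "x \<in> carrier G \<Longrightarrow> y \<in> carrier G \<Longrightarrow> gcomm G (inv y) x = inv y \<otimes> inv (gcomm G y x) \<otimes> y"
  by (simp add: gcomm_def inv_mult_group m_assoc)

lemma conj_gcomm:
  "x \<in> carrier G \<Longrightarrow> y \<in> carrier G \<Longrightarrow> z \<in> carrier G \<Longrightarrow>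
   z \<otimes> gcomm G x y \<otimes> inv z = gcomm G (z \<otimes> x \<otimes> inv z) (z \<otimes> y \<otimes> inv z)"
  by (simp add: gcomm_def inv_mult_group m_assoc)

lemma gcomm_eq_one_iff:
  assumes "x \<in> carrier G" "y \<in> carrier G"
  shows "gcomm G x y = \<one> \<longleftrightarrow> x \<otimes> y = y \<otimes> x"
proof -
  have "gcomm G x y = x \<otimes> y \<otimes> inv (y \<otimes> x)"
    using assms by (simp add: gcomm_def inv_mult_group m_assoc)
  then show ?thesis
    using assms by (metis inv_closed inv_equality inv_inv m_closed r_inv)
qed

lemma gcomm_in_derived:
  "x \<in> carrier G \<Longrightarrow> y \<in> carrier G \<Longrightarrow> gcomm G x y \<in> derived G (carrier G)"
  unfolding derived_def gcomm_def by (rule generate.incl) blast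

lemma derived_subset_subgroup:
  assumes "subgroup K G" "\<And>x y. x \<in> carrier G \<Longrightarrow> y \<in> carrier G \<Longrightarrow> gcomm G x y \<in> K"
  shows "derived G (carrier G) \<subseteq> K"
  unfolding derived_def using assms by (intro generate_subgroup_incl) (auto simp: gcomm_def)

lemma gcenter_conj: "z \<in> gcenter G \<Longrightarrow> y \<in> carrier G \<Longrightarrow> y \<otimes> z \<otimes> inv y = z"
  by (auto simp: gcenter_def) (metis inv_closed m_assoc r_inv r_one)

lemma subgroup_gcentralizer:
  assumes "H \<subseteq> carrier G" shows "subgroup (gcentralizer G H) G"
proof -
  have iff: "x \<in> gcentralizer G H \<longleftrightarrow> x \<in> carrier G \<and> (\<forall>h\<in>H. gcomm G x h = \<one>)" for x
    using assms gcomm_eq_one_iff unfolding gcentralizer_def by blast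
  show ?thesis
  proof (rule subgroupI)
    fix a b assume "a \<in> gcentralizer G H" "b \<in> gcentralizer G H"
    then show "inv a \<in> gcentralizer G H" "a \<otimes> b \<in> gcentralizer G H"
      using assms by (auto simp: iff gcomm_inv_left gcomm_mult_left)
  next
    have "\<one> \<in> gcentralizer G H" using assms by (auto simp: iff gcomm_def)
    then show "gcentralizer G H \<noteq> {}" by blast
  qed (auto simp: iff)
qed

lemma gcenter_eq_gcentralizer: "gcenter G = gcentralizer G (carrier G)"
  by (auto simp: gcenter_def gcentralizer_def)

lemma subgroup_gcenter: "subgroup (gcenter G) G"
  by (simp add: gcenter_eq_gcentralizer subgroup_gcentralizer)

lemma normal_gcenter: "gcenter G \<lhd> G"
  by (simp add: normal_inv_iff subgroup_gcenter gcenter_conj)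

lemma normal_gcentralizer:
  assumes "N \<lhd> G" shows "gcentralizer G N \<lhd> G"
proof -
  have N: "N \<subseteq> carrier G" using assms normal_imp_subgroup subgroup.subset by blast
  have "z \<otimes> x \<otimes> inv z \<in> gcentralizer G N"
    if z: "z \<in> carrier G" and x: "x \<in> gcentralizer G N" for z x
  proof -
    have xc: "x \<in> carrier G" using x by (simp add: gcentralizer_def)
    have "z \<otimes> x \<otimes> inv z \<otimes> h = h \<otimes> (z \<otimes> x \<otimes> inv z)" if h: "h \<in> N" for h
    proof -
      have h': "inv z \<otimes> h \<otimes> z \<in> N" using normal.inv_op_closed1[OF assms z h] .
      have hc: "h \<in> carrier G" using h N by blast
      have "z \<otimes> x \<otimes> inv z \<otimes> h = z \<otimes> (x \<otimes> (inv z \<otimes> h \<otimes> z)) \<otimes> inv z"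
        using z xc hc by (simp add: m_assoc)
      also have "\<dots> = z \<otimes> ((inv z \<otimes> h \<otimes> z) \<otimes> x) \<otimes> inv z"
        using x h' by (simp add: gcentralizer_def)
      also have "\<dots> = h \<otimes> (z \<otimes> x \<otimes> inv z)"
        using z xc hc by (simp add: m_assoc)
      finally show ?thesis .
    qed
    then show ?thesis using z xc by (simp add: gcentralizer_def)
  qed
  then show ?thesis using subgroup_gcentralizer[OF N] by (simp add: normal_inv_iff)
qed

lemma subgroup_gcentralizer_derived: "subgroup (gcentralizer G (derived G (carrier G))) G"
  using normal_gcentralizer[OF derived_self_is_normal] by (rule normal_imp_subgroup)

lemma subgroup_gcomm_preimage:
  assumes "H \<lhd> G" "x \<in> carrier G"
  shows "subgroup {y \<in> carrier G. gcomm G y x \<in> H} G"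
proof -
  interpret H: normal H G using assms(1) .
  show ?thesis
  proof (rule subgroupI)
    fix y assume "y \<in> {y \<in> carrier G. gcomm G y x \<in> H}"
    then have "y \<in> carrier G" "gcomm G y x \<in> H" by auto
    then show "inv y \<in> {y \<in> carrier G. gcomm G y x \<in> H}"
      using assms(2) H.inv_op_closed1 by (simp add: gcomm_inv_left)
  next
    fix y z assume "y \<in> {y \<in> carrier G. gcomm G y x \<in> H}" "z \<in> {y \<in> carrier G. gcomm G y x \<in> H}"
    then have "y \<in> carrier G" "gcomm G y x \<in> H" "z \<in> carrier G" "gcomm G z x \<in> H" by auto
    then show "y \<otimes> z \<in> {y \<in> carrier G. gcomm G y x \<in> H}"
      using assms(2) H.inv_op_closed2 by (simp add: gcomm_mult_left)
  next
    have "\<one> \<in> {y \<in> carrier G. gcomm G y x \<in> H}" using assms(2) by (simp add: gcomm_def)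
    then show "{y \<in> carrier G. gcomm G y x \<in> H} \<noteq> {}" by blast
  qed auto
qed

lemma normal_inter_gcenter:
  assumes "subgroup H G" shows "H \<inter> gcenter G \<lhd> G\<lparr>carrier := H\<rparr>"
proof -
  interpret H: group "G\<lparr>carrier := H\<rparr>" using subgroup_imp_group[OF assms] .
  have "subgroup (H \<inter> gcenter G) (G\<lparr>carrier := H\<rparr>)"
    using subgroup_incl[OF subgroups_Inter_pair[OF assms subgroup_gcenter] assms] by blast
  moreover have "x \<otimes> z \<otimes> inv\<^bsub>G\<lparr>carrier := H\<rparr>\<^esub> x \<in> H \<inter> gcenter G"
    if "x \<in> H" "z \<in> H \<inter> gcenter G" for x z
    using that gcenter_conj m_inv_consistent[OF assms] subgroup.mem_carrier[OF assms] by simp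
  ultimately show ?thesis by (simp add: H.normal_inv_iff)
qed

lemma gcomm_mult_commuting_factors:
  assumes "u \<in> carrier G" "v \<in> carrier G" "c \<in> carrier G" "x \<in> carrier G"
    and "u \<otimes> v = v \<otimes> u" "u \<otimes> x = x \<otimes> u" "c \<otimes> v = v \<otimes> c"
    and "u \<otimes> gcomm G c x = gcomm G c x \<otimes> u" "v \<otimes> gcomm G c x = gcomm G c x \<otimes> v"
  shows "gcomm G (u \<otimes> c) (v \<otimes> x) = gcomm G c x"
proof -
  have commuting: "gcomm G u v = \<one>" "gcomm G u x = \<one>" "gcomm G c v = \<one>"
    using assms by (simp_all add: gcomm_eq_one_iff)
  have "gcomm G u (v \<otimes> x) = \<one>" "gcomm G c (v \<otimes> x) = gcomm G c x"
    using assms by (simp_all add: gcomm_mult_right commuting m_assoc)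
  then show ?thesis
    using assms by (simp add: gcomm_mult_left m_assoc)
qed

lemma gcomm_gcentralizer_derived_mem_gcenter:
  assumes c: "c \<in> gcentralizer G (derived G (carrier G))"
    and x: "x \<in> gcentralizer G (derived G (carrier G))"
  shows "gcomm G c x \<in> gcenter G"
proof -
  \<comment> \<open>Conjugating by \<open>z\<close> multiplies \<open>c\<close> and \<open>x\<close> by the commutators \<open>u, v \<in> D\<close>, and \<open>u\<close> also
    lies in the normal subgroup \<open>C\<close>; then all the commutations needed to cancel \<open>u\<close> and \<open>v\<close> hold.\<close>
  define D where "D = derived G (carrier G)"
  define C where "C = gcentralizer G D"
  interpret C: normal C G
    unfolding C_def D_def using normal_gcentralizer[OF derived_self_is_normal] .
  have commute: "a \<otimes> h = h \<otimes> a" if "a \<in> C" "h \<in> D" for a h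
    using that unfolding C_def gcentralizer_def by blast
  have cx: "c \<in> C" "x \<in> C" "c \<in> carrier G" "x \<in> carrier G"
    using c x unfolding C_def D_def gcentralizer_def by blast+
  define w where "w = gcomm G c x"
  have w: "w \<in> C" "w \<in> D" "w \<in> carrier G"
    unfolding w_def D_def using cx by (simp_all add: gcomm_in_derived)
      (simp add: gcomm_def C.m_closed C.m_inv_closed)
  have "z \<otimes> w = w \<otimes> z" if z: "z \<in> carrier G" for z
  proof -
    define u where "u = gcomm G z c"
    define v where "v = gcomm G z x"
    have u: "u \<in> C" "u \<in> D" "u \<in> carrier G"
      unfolding u_def D_def using z cx by (simp_all add: gcomm_in_derived)
        (simp add: gcomm_def C.m_closed C.m_inv_closed C.inv_op_closed2)
    have v: "v \<in> D" "v \<in> carrier G"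
      using z cx by (auto simp: v_def D_def gcomm_in_derived)
    have "z \<otimes> w \<otimes> inv z = gcomm G (z \<otimes> c \<otimes> inv z) (z \<otimes> x \<otimes> inv z)"
      using z cx by (simp add: w_def conj_gcomm)
    also have "\<dots> = gcomm G (u \<otimes> c) (v \<otimes> x)"
      using z cx by (simp add: u_def v_def gcomm_def m_assoc)
    also have "\<dots> = w"
      unfolding w_def
      using gcomm_mult_commuting_factors[OF u(3) v(2) cx(3,4) commute[OF u(1) v(1)]
          commute[OF cx(2) u(2), symmetric] commute[OF cx(1) v(1)]]
        commute[OF w(1) u(2)] commute[OF w(1) v(1)]
      by (simp add: w_def)
    finally have "z \<otimes> w \<otimes> inv z \<otimes> z = w \<otimes> z" by simp
    then show ?thesis using z w by (simp add: m_assoc)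
  qed
  then show ?thesis using w by (simp add: w_def gcenter_def)
qed

lemma subgroup_of_prime_index_maximal:
  assumes "finite (carrier G)" "subgroup H G" "Factorial_Ring.prime (card (rcosets H))"
    and "subgroup K G" "H \<subseteq> K"
  shows "K = H \<or> K = carrier G"
proof -
  interpret K: group "G\<lparr>carrier := K\<rparr>" using subgroup_imp_group[OF assms(4)] .
  have finite: "finite K" "finite H"
    using finite_subset[OF subgroup.subset[OF assms(4)] assms(1)] assms(5) finite_subset by auto
  have "card (rcosets H) * card H = card (rcosets K) * card (rcosets\<^bsub>G\<lparr>carrier := K\<rparr>\<^esub> H) * card H"
    using lagrange[OF assms(2)] lagrange[OF assms(4)] K.lagrange[OF subgroup_incl[OF assms(2,4,5)]]
    by (simp add: order_def mult.assoc)
  moreover have "card H > 0" using finite subgroup.one_closed[OF assms(2)] card_gt_0_iff by blast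
  ultimately have "card (rcosets H) = card (rcosets K) * card (rcosets\<^bsub>G\<lparr>carrier := K\<rparr>\<^esub> H)"
    by simp
  then consider "card (rcosets K) = 1" | "card (rcosets\<^bsub>G\<lparr>carrier := K\<rparr>\<^esub> H) = 1"
    using assms(3) prime_product by auto
  then show ?thesis
  proof cases
    case 1
    then have "card K = card (carrier G)" using lagrange[OF assms(4)] by (simp add: order_def)
    then show ?thesis using card_subset_eq[OF assms(1) subgroup.subset[OF assms(4)]] by blast
  next
    case 2
    then have "card H = card K"
      using K.lagrange[OF subgroup_incl[OF assms(2,4,5)]] by (simp add: order_def)
    then show ?thesis using card_subset_eq[OF finite(1) assms(5)] by blast
  qed
qed

lemma subgroup_of_prime_index_proper:
  assumes "finite (carrier G)" "Factorial_Ring.prime (card (rcosets H))"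
  shows "H \<noteq> carrier G"
proof
  assume "H = carrier G"
  moreover have "card (rcosets (carrier G)) * order G = 1 * order G"
    using lagrange[OF subgroup_self] by (simp add: order_def)
  ultimately have "card (rcosets H) = 1"
    using assms(1) order_gt_0_iff_finite by (simp del: One_nat_def)
  with assms(2) show False by simp
qed

lemma gstar_gcenter_subset_gcentralizer_derived:
  "gstar G (gcenter G) \<subseteq> gcentralizer G (derived G (carrier G))"
proof
  fix x assume "x \<in> gstar G (gcenter G)"
  then have x: "x \<in> carrier G" and central: "\<And>y. y \<in> carrier G \<Longrightarrow> gcomm G y x \<in> gcenter G"
    by (auto simp: gstar_def)
  have commute: "gcomm G y x \<otimes> a = a \<otimes> gcomm G y x" if "y \<in> carrier G" "a \<in> carrier G" for y a
    using central[OF that(1)] that(2) by (simp add: gcenter_def)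
  interpret f: group_hom G G "\<lambda>y. gcomm G y x"
  proof
    show "(\<lambda>y. gcomm G y x) \<in> hom G G"
    proof (rule homI)
      fix y z assume y: "y \<in> carrier G" and z: "z \<in> carrier G"
      have "gcomm G (y \<otimes> z) x = gcomm G z x \<otimes> gcomm G y x"
        using gcomm_mult_left[OF x y z] gcenter_conj[OF central[OF z] y] by simp
      also have "\<dots> = gcomm G y x \<otimes> gcomm G z x"
        using commute[OF z, of "gcomm G y x"] x y by simp
      finally show "gcomm G (y \<otimes> z) x = gcomm G y x \<otimes> gcomm G z x" .
    qed (use x in simp)
  qed
  have "derived G (carrier G) \<subseteq> kernel G G (\<lambda>y. gcomm G y x)"
  proof (rule derived_subset_subgroup[OF f.subgroup_kernel])
    fix a b assume a: "a \<in> carrier G" and b: "b \<in> carrier G"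
    have "gcomm G (gcomm G a x) (gcomm G b x) = \<one>"
      using commute[OF a, of "gcomm G b x"] a b x by (simp add: gcomm_eq_one_iff)
    then show "gcomm G a b \<in> kernel G G (\<lambda>y. gcomm G y x)"
      using a b by (simp add: kernel_def f.hom_gcomm)
  qed
  then show "x \<in> gcentralizer G (derived G (carrier G))"
    using x subgroup.subset[OF derived_is_subgroup[OF subset_refl]]
    by (auto simp: gcentralizer_def kernel_def gcomm_eq_one_iff)
qed

lemma gstar_gcenterI:
  assumes "finite (carrier G)"
    and "Factorial_Ring.prime (card (rcosets (gcentralizer G (derived G (carrier G)))))"
    and "g \<in> carrier G" "g \<notin> gcentralizer G (derived G (carrier G))"
    and "x \<in> carrier G" "\<forall>c \<in> gcentralizer G (derived G (carrier G)). gcomm G c x \<in> gcenter G"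
    and "gcomm G g x \<in> gcenter G"
  shows "x \<in> gstar G (gcenter G)"
proof -
  let ?T = "{y \<in> carrier G. gcomm G y x \<in> gcenter G}"
  have "subgroup ?T G" using subgroup_gcomm_preimage[OF normal_gcenter assms(5)] .
  moreover have "gcentralizer G (derived G (carrier G)) \<subseteq> ?T"
    using assms(6) subgroup.subset[OF subgroup_gcentralizer_derived] by blast
  moreover have "?T \<noteq> gcentralizer G (derived G (carrier G))" using assms(3,4,7) by blast
  ultimately have "?T = carrier G"
    using subgroup_of_prime_index_maximal[OF assms(1) subgroup_gcentralizer_derived assms(2)] by blast
  then show ?thesis using assms(5) by (auto simp: gstar_def)
qed

lemma gstar_gcenter_psubset_gcentralizer_derived:
  assumes "finite (carrier G)"
    and "Factorial_Ring.prime (card (rcosets (gcentralizer G (derived G (carrier G)))))"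
  shows "gstar G (gcenter G) \<subset> gcentralizer G (derived G (carrier G))"
proof -
  have "gcentralizer G (derived G (carrier G)) \<noteq> carrier G"
    using subgroup_of_prime_index_proper[OF assms] .
  then obtain g where g: "g \<in> carrier G" "g \<notin> gcentralizer G (derived G (carrier G))"
    using subgroup.subset[OF subgroup_gcentralizer_derived] by blast
  have "gstar G (gcenter G) \<noteq> gcentralizer G (derived G (carrier G))"
  proof
    assume eq: "gstar G (gcenter G) = gcentralizer G (derived G (carrier G))"
    have "gcomm G c g \<in> gcenter G" if "c \<in> gcentralizer G (derived G (carrier G))" for c
    proof -
      have "c \<in> carrier G" "gcomm G g c \<in> gcenter G"
        using that g(1) by (auto simp: eq [symmetric] gstar_def)
      then show ?thesis
        using g(1) inv_gcomm subgroup.m_inv_closed[OF subgroup_gcenter] by metis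
    qed
    then have "g \<in> gstar G (gcenter G)"
      using gstar_gcenterI[OF assms g g(1)] g(1) subgroup.one_closed[OF subgroup_gcenter] by simp
    with eq g(2) show False by blast
  qed
  then show ?thesis using gstar_gcenter_subset_gcentralizer_derived by blast
qed

lemma gstar_gcenter_iff:
  assumes "finite (carrier G)"
    and "Factorial_Ring.prime (card (rcosets (gcentralizer G (derived G (carrier G)))))"
    and "g \<in> carrier G" "g \<notin> gcentralizer G (derived G (carrier G))"
    and "x \<in> gcentralizer G (derived G (carrier G))"
  shows "x \<in> gstar G (gcenter G) \<longleftrightarrow> gcomm G g x \<in> gcenter G"
  using gstar_gcenterI[OF assms(1-4)] gcomm_gcentralizer_derived_mem_gcenter[OF _ assms(5)]
    assms(3,5) subgroup.subset[OF subgroup_gcentralizer_derived]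
  by (auto simp: gstar_def)

lemma gcomm_hom_gcentralizer_derived:
  assumes "g \<in> carrier G"
  shows "gcomm G g \<in> hom (G\<lparr>carrier := gcentralizer G (derived G (carrier G))\<rparr>)
    (G\<lparr>carrier := derived G (carrier G)\<rparr>)"
proof (rule homI)
  fix x assume "x \<in> carrier (G\<lparr>carrier := gcentralizer G (derived G (carrier G))\<rparr>)"
  then show "gcomm G g x \<in> carrier (G\<lparr>carrier := derived G (carrier G)\<rparr>)"
    using assms gcomm_in_derived by (simp add: gcentralizer_def)
next
  fix x y assume "x \<in> carrier (G\<lparr>carrier := gcentralizer G (derived G (carrier G))\<rparr>)"
    and "y \<in> carrier (G\<lparr>carrier := gcentralizer G (derived G (carrier G))\<rparr>)"
  then have x: "x \<in> carrier G" "\<forall>h \<in> derived G (carrier G). x \<otimes> h = h \<otimes> x"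
    and y: "y \<in> carrier G" by (auto simp: gcentralizer_def)
  have "x \<otimes> gcomm G g y = gcomm G g y \<otimes> x"
    using x(2) gcomm_in_derived[OF assms y] by blast
  then show "gcomm G g (x \<otimes>\<^bsub>G\<lparr>carrier := gcentralizer G (derived G (carrier G))\<rparr>\<^esub> y) =
      gcomm G g x \<otimes>\<^bsub>G\<lparr>carrier := derived G (carrier G)\<rparr>\<^esub> gcomm G g y"
    using assms x(1) y by (simp add: gcomm_mult_right m_assoc)
qed

lemma kernel_gcomm_mod_gcenter:
  assumes "finite (carrier G)"
    and "Factorial_Ring.prime (card (rcosets (gcentralizer G (derived G (carrier G)))))"
    and "g \<in> carrier G" "g \<notin> gcentralizer G (derived G (carrier G))"
  shows "kernel (G\<lparr>carrier := gcentralizer G (derived G (carrier G))\<rparr>)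
      (G\<lparr>carrier := derived G (carrier G)\<rparr> Mod (derived G (carrier G) \<inter> gcenter G))
      ((\<lambda>a. (derived G (carrier G) \<inter> gcenter G) #>\<^bsub>G\<lparr>carrier := derived G (carrier G)\<rparr>\<^esub> a) \<circ> gcomm G g)
    = gstar G (gcenter G)"
proof -
  define D where "D = derived G (carrier G)"
  have D: "subgroup D G" unfolding D_def by (simp add: derived_is_subgroup)
  interpret D: group "G\<lparr>carrier := D\<rparr>" using subgroup_imp_group[OF D] .
  have N: "subgroup (D \<inter> gcenter G) (G\<lparr>carrier := D\<rparr>)"
    using normal_imp_subgroup[OF normal_inter_gcenter[OF D]] .
  have "(D \<inter> gcenter G) #>\<^bsub>G\<lparr>carrier := D\<rparr>\<^esub> gcomm G g x = D \<inter> gcenter G \<longleftrightarrow>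
      gcomm G g x \<in> gcenter G" if "x \<in> carrier G" for x
  proof -
    have "gcomm G g x \<in> carrier (G\<lparr>carrier := D\<rparr>)"
      using assms(3) that by (simp add: D_def gcomm_in_derived)
    then show ?thesis using D.coset_join1[OF _ _ N] D.coset_join2[OF _ N] by auto
  qed
  then show ?thesis
    using gstar_gcenter_iff[OF assms] gstar_gcenter_subset_gcentralizer_derived
      subgroup.subset[OF subgroup_gcentralizer_derived]
    by (auto simp: kernel_def D_def)
qed

end

theorem lemma3p3:
  fixes G :: "('a, 'b) monoid_scheme" and p :: nat
  assumes "group G" and "finite (carrier G)"
    and "Factorial_Ring.prime p" and "p dvd order G"
    and "\<forall>q. Factorial_Ring.prime q \<and> q dvd order G \<longrightarrow> p \<le> q"
    and "\<not> (derived G (carrier G) \<subseteq> gcenter G)"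
    and "card (rcosets\<^bsub>G\<^esub> (gcentralizer G (derived G (carrier G)))) = p"
    and "card (derived G (carrier G) \<inter> gcenter G) = p"
  shows "gstar G (gcenter G) \<subset> gcentralizer G (derived G (carrier G))
    \<and> gstar G (gcenter G) \<lhd> (G\<lparr>carrier := gcentralizer G (derived G (carrier G))\<rparr>)
    \<and> (derived G (carrier G) \<inter> gcenter G) \<lhd> (G\<lparr>carrier := derived G (carrier G)\<rparr>)
    \<and> (\<exists>h. h \<in> hom ((G\<lparr>carrier := gcentralizer G (derived G (carrier G))\<rparr>) Mod gstar G (gcenter G))
                    ((G\<lparr>carrier := derived G (carrier G)\<rparr>) Mod (derived G (carrier G) \<inter> gcenter G))
           \<and> inj_on h (carrier ((G\<lparr>carrier := gcentralizer G (derived G (carrier G))\<rparr>) Mod gstar G (gcenter G))))"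
proof -
  interpret group G by fact
  define D where "D = derived G (carrier G)"
  define C where "C = gcentralizer G D"
  define N where "N = D \<inter> gcenter G"
  have prime: "Factorial_Ring.prime (card (rcosets\<^bsub>G\<^esub> C))"
    using assms(3,7) by (simp add: C_def D_def)
  obtain g where g: "g \<in> carrier G" "g \<notin> C"
    using subgroup_of_prime_index_proper[OF assms(2) prime]
      subgroup.subset[OF subgroup_gcentralizer_derived]
    by (auto simp: C_def D_def)
  have N: "N \<lhd> G\<lparr>carrier := D\<rparr>"
    unfolding N_def D_def by (simp add: normal_inter_gcenter derived_is_subgroup)
  let ?phi = "(\<lambda>a. N #>\<^bsub>G\<lparr>carrier := D\<rparr>\<^esub> a) \<circ> gcomm G g"
  interpret phi: group_hom "G\<lparr>carrier := C\<rparr>" "G\<lparr>carrier := D\<rparr> Mod N" ?phi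
  proof (intro group_hom.intro group_hom_axioms.intro)
    show "group (G\<lparr>carrier := C\<rparr>)"
      by (simp add: C_def D_def subgroup_gcentralizer_derived subgroup_imp_group)
    show "group (G\<lparr>carrier := D\<rparr> Mod N)" using N by (rule normal.factorgroup_is_group)
    show "?phi \<in> hom (G\<lparr>carrier := C\<rparr>) (G\<lparr>carrier := D\<rparr> Mod N)"
      using gcomm_hom_gcentralizer_derived[OF g(1)] normal.r_coset_hom_Mod[OF N]
      unfolding C_def D_def by (rule Group.hom_compose)
  qed
  have "kernel (G\<lparr>carrier := C\<rparr>) (G\<lparr>carrier := D\<rparr> Mod N) ?phi = gstar G (gcenter G)"
    using kernel_gcomm_mod_gcenter[OF assms(2) prime[unfolded C_def D_def]] g
    by (simp add: C_def D_def N_def)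
  then show ?thesis
    using gstar_gcenter_psubset_gcentralizer_derived[OF assms(2) prime[unfolded C_def D_def]]
      phi.normal_kernel phi.FactGroup_hom phi.FactGroup_inj_on N
    by (auto simp: C_def D_def N_def)
qed

end
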